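(* Let $\mathcal{H}$ be an infinite-dimensional complex Hilbert space. (a) Every finitely additive probability measure $\mu$ on $\mathcal{P}_{\mathbb{R}}(\mathcal{H})$ vanishes on all (projections onto) finite-dimensional real subspaces of $\mathcal{H}$. (b) If $\mathcal{H}$ is separable, there exists no probability measure on $\mathcal{P}_{\mathbb{R}}(\mathcal{H})$.
   Context: $\mathcal{P}_{\mathbb{R}}(\mathcal{H})$ is the set of real orthogonal projections onto closed real linear subspaces of $\mathcal{H}$, ordered by inclusion of ranges, with $0,1$, join = projection onto closed real span, meet = projection onto intersection, and involution $E'=1+iEi$, the projection onto the symplectic complement $\{\xi:\mathrm{Im}\langle\xi,h\rangle=0\ \forall h\in E\mathcal{H}\}$. Elements $E,F$ are separated if $E\le F'$. A probability measure on $\mathcal{P}_{\mathbb{R}}(\mathcal{H})$ is a map $\mu$ into $[0,1]$ with $\mu(0)=0$, $\mu(1)=1$, $E\le F\Rightarrow\mu(E)\le\mu(F)$, and $\mu(\bigvee_{E\in\mathcal{Q}_0}E)=\sum_{E\in\mathcal{Q}_0}\mu(E)$ for every countable subset $\mathcal{Q}_0$ of pairwise separated elements; it is finitely additive if this last identity is only required for finite such $\mathcal{Q}_0$. *)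

theory Defs
  imports "HOL-Analysis.Analysis"
begin

text \<open>A complex Hilbert space is modelled as a real Hilbert space
  (type class real_inner + complete_space, the real inner product being
  Re of the complex one) together with the operator J of multiplication
  by the imaginary unit i: a real-linear orthogonal map with J (J x) = - x.\<close>

definition complex_structure :: "('a::{real_inner,complete_space} \<Rightarrow> 'a) \<Rightarrow> bool" where
  "complex_structure J \<longleftrightarrow> linear J \<and> (\<forall>x. J (J x) = - x) \<and> (\<forall>x y. J x \<bullet> J y = x \<bullet> y)"

definition cscale :: "('a::{real_inner,complete_space} \<Rightarrow> 'a) \<Rightarrow> complex \<Rightarrow> 'a \<Rightarrow> 'a" where
  "cscale J c x = Re c *\<^sub>R x + Im c *\<^sub>R J x"

definition cinner :: "('a::{real_inner,complete_space} \<Rightarrow> 'a) \<Rightarrow> 'a \<Rightarrow> 'a \<Rightarrow> complex" where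
  "cinner J x y = Complex (x \<bullet> y) (x \<bullet> J y)"

definition fin_dim_real :: "'a::real_vector set \<Rightarrow> bool" where
  "fin_dim_real S \<longleftrightarrow> (\<exists>B. finite B \<and> span B = S)"

definition real_proj :: "('a::{real_inner,complete_space} \<Rightarrow> 'a) \<Rightarrow> bool" where
  "real_proj P \<longleftrightarrow> bounded_linear P \<and> (\<forall>x. P (P x) = P x) \<and> (\<forall>x y. P x \<bullet> y = x \<bullet> P y)"

definition proj_le :: "('a::{real_inner,complete_space} \<Rightarrow> 'a) \<Rightarrow> ('a \<Rightarrow> 'a) \<Rightarrow> bool" where
  "proj_le E F \<longleftrightarrow> range E \<subseteq> range F"

definition proj_onto :: "'a::{real_inner,complete_space} set \<Rightarrow> ('a \<Rightarrow> 'a)" where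
  "proj_onto S = (THE P. real_proj P \<and> range P = S)"

definition proj_join :: "('a::{real_inner,complete_space} \<Rightarrow> 'a) set \<Rightarrow> ('a \<Rightarrow> 'a)" where
  "proj_join Q = proj_onto (closure (span (\<Union>E\<in>Q. range E)))"

definition proj_prime :: "('a::{real_inner,complete_space} \<Rightarrow> 'a) \<Rightarrow> ('a \<Rightarrow> 'a) \<Rightarrow> ('a \<Rightarrow> 'a)" where
  "proj_prime J E = (\<lambda>x. x + J (E (J x)))"

definition separated :: "('a::{real_inner,complete_space} \<Rightarrow> 'a) \<Rightarrow> ('a \<Rightarrow> 'a) \<Rightarrow> ('a \<Rightarrow> 'a) \<Rightarrow> bool" where
  "separated J E F \<longleftrightarrow> proj_le E (proj_prime J F)"

definition pairwise_separated :: "('a::{real_inner,complete_space} \<Rightarrow> 'a) \<Rightarrow> ('a \<Rightarrow> 'a) set \<Rightarrow> bool" where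
  "pairwise_separated J Q \<longleftrightarrow> (\<forall>E\<in>Q. \<forall>F\<in>Q. E \<noteq> F \<longrightarrow> separated J E F)"

text \<open>Probability measures on P_R(H); mu is only relevant on real projections.\<close>

definition prob_basic :: "('a::{real_inner,complete_space} \<Rightarrow> 'a) \<Rightarrow> (('a \<Rightarrow> 'a) \<Rightarrow> real) \<Rightarrow> bool" where
  "prob_basic J \<mu> \<longleftrightarrow>
     (\<forall>E. real_proj E \<longrightarrow> 0 \<le> \<mu> E \<and> \<mu> E \<le> 1) \<and>
     \<mu> (\<lambda>x. 0) = 0 \<and> \<mu> id = 1 \<and>
     (\<forall>E F. real_proj E \<and> real_proj F \<and> proj_le E F \<longrightarrow> \<mu> E \<le> \<mu> F)"

definition fin_add_prob_measure :: "('a::{real_inner,complete_space} \<Rightarrow> 'a) \<Rightarrow> (('a \<Rightarrow> 'a) \<Rightarrow> real) \<Rightarrow> bool" where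
  "fin_add_prob_measure J \<mu> \<longleftrightarrow> prob_basic J \<mu> \<and>
     (\<forall>Q. finite Q \<and> Q \<subseteq> Collect real_proj \<and> pairwise_separated J Q \<longrightarrow>
        \<mu> (proj_join Q) = (\<Sum>E\<in>Q. \<mu> E))"

definition prob_measure :: "('a::{real_inner,complete_space} \<Rightarrow> 'a) \<Rightarrow> (('a \<Rightarrow> 'a) \<Rightarrow> real) \<Rightarrow> bool" where
  "prob_measure J \<mu> \<longleftrightarrow> prob_basic J \<mu> \<and>
     (\<forall>Q. countable Q \<and> Q \<subseteq> Collect real_proj \<and> pairwise_separated J Q \<longrightarrow>
        (\<mu> has_sum \<mu> (proj_join Q)) Q)"

end

theory Submission
  imports Defs
begin

text \<open>(a) A finitely additive \<mu> is subadditive on separated pairs and, by pigeonhole, vanishes on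
  every projection that lies below arbitrarily many pairwise separated projections. In infinite
  dimension an isotropic finite-dimensional subspace lies in n pairwise separated ones for every n,
  so it is null. A complex line span {u, J u} lies in the sum of an isotropic plane and one of n
  pairwise separated planes, so it is null too. The complex span of finitely many vectors is an
  orthogonal sum of complex lines, and it contains every finite-dimensional real subspace spanned by
  those vectors.
  (b) If the space is separable, the complex Gram-Schmidt process applied to a dense sequence gives
  countably many pairwise separated complex lines whose join is the identity, so countable
  additivity would give 1 = 0.\<close>

section \<open>Real orthogonal projections\<close>

lemma real_proj_fixed: "real_proj P \<Longrightarrow> x \<in> range P \<Longrightarrow> P x = x"
  by (auto simp: real_proj_def)

lemma subspace_range_real_proj: "real_proj P \<Longrightarrow> subspace (range P)"
  by (simp add: real_proj_def bounded_linear.linear linear_subspace_image)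

lemma closed_range_real_proj: "real_proj P \<Longrightarrow> closed (range P)"
proof -
  assume P: "real_proj P"
  then have "range P = {x. P x = x}"
    by (auto simp: real_proj_def) (metis rangeI)
  moreover have "closed {x. P x = x}"
    using P by (intro closed_Collect_eq) (auto simp: real_proj_def linear_continuous_on)
  ultimately show ?thesis by simp
qed

lemma inner_residual_real_proj:
  assumes "real_proj P" and "w \<in> range P"
  shows "(y - P y) \<bullet> w = 0"
proof -
  have "(y - P y) \<bullet> w = y \<bullet> P w - P y \<bullet> P w"
    using real_proj_fixed[OF assms] by (simp add: inner_diff_left)
  then show ?thesis
    using assms(1) by (simp add: real_proj_def)
qed

lemma real_proj_unique:
  assumes P: "real_proj P" and Q: "real_proj Q" and "range P = range Q"
  shows "P = Q"
proof
  fix x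
  have "P x \<bullet> y = Q x \<bullet> y" for y
  proof -
    have "P x \<bullet> y = Q (P x) \<bullet> y"
      using real_proj_fixed[OF Q] assms(3) by (metis rangeI)
    also have "\<dots> = x \<bullet> P (Q y)"
      using P Q by (simp add: real_proj_def)
    also have "\<dots> = Q x \<bullet> y"
      using real_proj_fixed[OF P] assms(3) Q by (metis rangeI real_proj_def)
    finally show ?thesis .
  qed
  then have "(P x - Q x) \<bullet> (P x - Q x) = 0"
    by (simp add: inner_diff_left)
  then show "P x = Q x"
    by simp
qed

lemma proj_onto_range: "real_proj P \<Longrightarrow> proj_onto (range P) = P"
  unfolding proj_onto_def by (rule the_equality) (auto intro: real_proj_unique)

lemma real_proj_zero: "real_proj (\<lambda>x. 0)"
  by (simp add: real_proj_def)

lemma real_proj_id: "real_proj id"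
  by (simp add: real_proj_def id_def)

text \<open>For c = 0 the junk value x / 0 = 0 gives P' = P, so no case split on c is needed.\<close>

lemma real_proj_insert_orthogonal:
  fixes c :: "'a::{real_inner,complete_space}"
  assumes P: "real_proj P" and c: "\<And>w. w \<in> range P \<Longrightarrow> c \<bullet> w = 0"
  defines "P' \<equiv> \<lambda>x. P x + (x \<bullet> c / (c \<bullet> c)) *\<^sub>R c"
  shows "real_proj P'" and "range P' = span (insert c (range P))"
proof -
  have bl: "bounded_linear P" and idem: "\<And>x. P (P x) = P x" and sa: "\<And>x y. P x \<bullet> y = x \<bullet> P y"
    using P by (auto simp: real_proj_def)
  have cP: "P x \<bullet> c = 0" for x
    using c[of "P x"] by (simp add: inner_commute)
  have "P c \<bullet> P c = 0"
    using cP[of c] by (simp add: sa idem)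
  then have Pc: "P c = 0"
    by simp
  have fix_P: "P' w = w" if "w \<in> range P" for w
  proof -
    have "w \<bullet> c = 0"
      using c[OF that] by (simp add: inner_commute)
    then show ?thesis
      using real_proj_fixed[OF P that] by (simp add: P'_def)
  qed
  have "bounded_linear P'"
    unfolding P'_def
    by (intro bounded_linear_add bl bounded_linear_scaleR_const
        bounded_linear_compose[OF bounded_linear_divide bounded_linear_inner_left])
  moreover have "P' (P' x) = P' x" for x
    by (cases "c = 0") (simp_all add: P'_def linear_simps[OF bl] idem Pc inner_add_left cP)
  moreover have "P' x \<bullet> y = x \<bullet> P' y" for x y
  proof -
    have "y \<bullet> P x = x \<bullet> P y"
      using sa[of x y] by (simp add: inner_commute)
    then show ?thesis
      by (simp add: P'_def inner_add_left inner_add_right inner_commute mult.commute)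
  qed
  ultimately show rp: "real_proj P'"
    by (simp add: real_proj_def)
  show "range P' = span (insert c (range P))"
  proof
    show "range P' \<subseteq> span (insert c (range P))"
      by (auto simp: P'_def intro!: span_add span_mul intro: span_base)
    have "P' c = c"
      using Pc by (cases "c = 0") (simp_all add: P'_def)
    then have "c \<in> range P'"
      by (metis rangeI)
    moreover have "range P \<subseteq> range P'"
      using fix_P by (metis image_subsetI rangeI)
    ultimately show "span (insert c (range P)) \<subseteq> range P'"
      using subspace_range_real_proj[OF rp] by (simp add: span_minimal)
  qed
qed

lemma real_proj_span_exists:
  fixes B :: "'a::{real_inner,complete_space} set"
  assumes "finite B"
  shows "\<exists>P. real_proj P \<and> range P = span B"
  using assms
proof (induction B rule: finite_induct)
  case empty
  show ?case
    by (rule exI[of _ "\<lambda>x. 0"]) (auto simp: real_proj_zero)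
next
  case (insert b B)
  then obtain P where P: "real_proj P" "range P = span B"
    by blast
  define c where "c = b - P b"
  have c: "c \<bullet> w = 0" if "w \<in> range P" for w
    unfolding c_def using P(1) that by (rule inner_residual_real_proj)
  have "span (insert c (range P)) = span (insert c B)"
    unfolding P(2) by (simp only: span_insert span_span)
  also have "\<dots> = span (insert b B)"
    using P(2) by (intro eq_span_insert_eq) (auto simp: c_def intro!: span_neg)
  finally have "range (\<lambda>x. P x + (x \<bullet> c / (c \<bullet> c)) *\<^sub>R c) = span (insert b B)"
    using real_proj_insert_orthogonal(2)[OF P(1) c] by simp
  then show ?case
    using real_proj_insert_orthogonal(1)[OF P(1) c] by blast
qed

lemma proj_onto_span:
  fixes B :: "'a::{real_inner,complete_space} set"
  assumes "finite B"
  shows real_proj_proj_onto_span: "real_proj (proj_onto (span B))"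
    and range_proj_onto_span [simp]: "range (proj_onto (span B)) = span B"
proof -
  obtain P where P: "real_proj P" "range P = span B"
    using real_proj_span_exists[OF assms] by blast
  then have "proj_onto (span B) = P"
    using proj_onto_range[OF P(1)] P(2) by simp
  then show "real_proj (proj_onto (span B))" "range (proj_onto (span B)) = span B"
    using P by simp_all
qed

lemma proj_onto_span_in_span [simp]: "finite B \<Longrightarrow> proj_onto (span B) x \<in> span B"
  by (metis range_proj_onto_span rangeI)

lemma span_UN_span: "span (\<Union>i\<in>I. span (G i)) = span (\<Union>i\<in>I. G i)"
proof (rule span_subspace)
  show "(\<Union>i\<in>I. span (G i)) \<subseteq> span (\<Union>i\<in>I. G i)"
    by (intro UN_least span_mono) blast
  show "span (\<Union>i\<in>I. G i) \<subseteq> span (\<Union>i\<in>I. span (G i))"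
    by (intro span_mono UN_mono span_superset) simp
qed simp

lemma proj_join_proj_onto_spans:
  assumes "\<And>i. i \<in> I \<Longrightarrow> finite (G i)"
  shows "proj_join ((\<lambda>i. proj_onto (span (G i))) ` I) = proj_onto (closure (span (\<Union>i\<in>I. G i)))"
proof -
  have "(\<Union>E\<in>(\<lambda>i. proj_onto (span (G i))) ` I. range E) = (\<Union>i\<in>I. span (G i))"
    unfolding image_image using assms by (intro SUP_cong) simp_all
  then show ?thesis
    by (simp add: proj_join_def span_UN_span)
qed

lemma proj_join_proj_onto_spans_finite:
  assumes "finite I" and "\<And>i. i \<in> I \<Longrightarrow> finite (G i)"
  shows "proj_join ((\<lambda>i. proj_onto (span (G i))) ` I) = proj_onto (span (\<Union>i\<in>I. G i))"
proof -
  have "finite (\<Union>i\<in>I. G i)"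
    using assms by blast
  then have "closed (span (\<Union>i\<in>I. G i))"
    using closed_range_real_proj real_proj_proj_onto_span range_proj_onto_span by metis
  then show ?thesis
    using proj_join_proj_onto_spans[of I G] assms(2) by simp
qed

lemma inner_eq_0_span: "(\<And>a. a \<in> A \<Longrightarrow> x \<bullet> a = 0) \<Longrightarrow> y \<in> span A \<Longrightarrow> x \<bullet> y = 0"
  using orthogonal_to_span[of y A x] by (simp add: orthogonal_def inner_commute)

section \<open>Finitely additive probability measures\<close>

lemma fin_add_prob_measure_basic:
  assumes "fin_add_prob_measure J \<mu>"
  shows fin_add_nonneg: "real_proj E \<Longrightarrow> 0 \<le> \<mu> E"
    and fin_add_le_one: "real_proj E \<Longrightarrow> \<mu> E \<le> 1"
    and fin_add_zero: "\<mu> (\<lambda>x. 0) = 0"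
    and fin_add_mono: "real_proj E \<Longrightarrow> real_proj F \<Longrightarrow> range E \<subseteq> range F \<Longrightarrow> \<mu> E \<le> \<mu> F"
  using assms by (auto simp: fin_add_prob_measure_def prob_basic_def proj_le_def)

lemma fin_add_mono_span:
  assumes "fin_add_prob_measure J \<mu>" and "finite A" and "finite B" and "span A \<subseteq> span B"
  shows "\<mu> (proj_onto (span A)) \<le> \<mu> (proj_onto (span B))"
  using assms by (simp add: fin_add_mono real_proj_proj_onto_span)

lemma fin_add_span_empty:
  fixes \<mu> :: "('a::{real_inner,complete_space} \<Rightarrow> 'a) \<Rightarrow> real"
  assumes "fin_add_prob_measure J \<mu>"
  shows "\<mu> (proj_onto (span {})) = 0"
proof -
  have "proj_onto (span {}) = (\<lambda>x::'a. 0)"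
    using proj_onto_range[OF real_proj_zero] by simp
  then show ?thesis
    using fin_add_zero[OF assms] by simp
qed

lemma prob_measure_imp_fin_add:
  assumes "prob_measure J \<mu>"
  shows "fin_add_prob_measure J \<mu>"
  unfolding fin_add_prob_measure_def
proof (intro conjI allI impI)
  show "prob_basic J \<mu>"
    using assms by (simp add: prob_measure_def)
  fix Q assume Q: "finite Q \<and> Q \<subseteq> Collect real_proj \<and> pairwise_separated J Q"
  then have "(\<mu> has_sum \<mu> (proj_join Q)) Q"
    using assms by (simp add: prob_measure_def countable_finite)
  moreover have "(\<mu> has_sum (\<Sum>E\<in>Q. \<mu> E)) Q"
    using Q by (simp add: has_sum_finite)
  ultimately show "\<mu> (proj_join Q) = (\<Sum>E\<in>Q. \<mu> E)"
    by (rule has_sum_unique)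
qed

section \<open>Complex structure and symplectic orthogonality\<close>

abbreviation cspan :: "('a::real_vector \<Rightarrow> 'a) \<Rightarrow> 'a set \<Rightarrow> 'a set" where
  "cspan J B \<equiv> span (B \<union> J ` B)"

text \<open>Since Im (cinner J a b) = a \<bullet> J b, sympl_orth J A B says that A lies in the symplectic
  complement of B.\<close>

definition sympl_orth :: "('a::real_inner \<Rightarrow> 'a) \<Rightarrow> 'a set \<Rightarrow> 'a set \<Rightarrow> bool" where
  "sympl_orth J A B \<longleftrightarrow> (\<forall>a\<in>A. \<forall>b\<in>B. a \<bullet> J b = 0)"

lemma sympl_orth_subset: "sympl_orth J A B \<Longrightarrow> A' \<subseteq> A \<Longrightarrow> B' \<subseteq> B \<Longrightarrow> sympl_orth J A' B'"
  by (auto simp: sympl_orth_def)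

locale complex_hilbert_space =
  fixes J :: "'a::{real_inner,complete_space} \<Rightarrow> 'a"
  assumes complex_structure_J: "complex_structure J"
begin

lemma complex_structure_linear: "linear J"
  using complex_structure_J by (simp add: complex_structure_def)

lemma complex_structure_twice [simp]: "J (J x) = - x"
  using complex_structure_J by (simp add: complex_structure_def)

lemma inner_complex_structure_left: "J x \<bullet> y = - (x \<bullet> J y)"
proof -
  have "J x \<bullet> y = J (J x) \<bullet> J y" using complex_structure_J unfolding complex_structure_def by metis
  then show ?thesis by simp
qed

lemma inner_complex_structure_commute: "x \<bullet> J y = - (y \<bullet> J x)"
  by (metis inner_commute inner_complex_structure_left)

lemma inner_complex_structure_self [simp]: "x \<bullet> J x = 0"
  using inner_complex_structure_left[of x x] by (simp add: inner_commute)

lemmas complex_structure_simps [simp] =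
  linear_add[OF complex_structure_linear] linear_diff[OF complex_structure_linear]
  linear_scale[OF complex_structure_linear] linear_0[OF complex_structure_linear]
  linear_sum[OF complex_structure_linear]

lemma cinner_eq_0_iff: "cinner J x y = 0 \<longleftrightarrow> x \<bullet> y = 0 \<and> x \<bullet> J y = 0"
  by (simp add: cinner_def complex_eq_iff)

lemma cinner_commute: "cinner J y x = cnj (cinner J x y)"
  by (simp add: cinner_def complex_eq_iff inner_commute inner_complex_structure_left[of x y, symmetric])

lemma complex_structure_cspan: "x \<in> cspan J B \<Longrightarrow> J x \<in> cspan J B"
proof -
  assume x: "x \<in> cspan J B"
  have "J ` (B \<union> J ` B) \<subseteq> cspan J B"
    by (auto intro: span_base span_neg[OF span_base])
  then have "span (J ` (B \<union> J ` B)) \<subseteq> cspan J B"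
    by (simp add: span_minimal)
  then show ?thesis
    using x span_linear_image[OF complex_structure_linear] by blast
qed

lemma sympl_orth_sym: "sympl_orth J A B \<Longrightarrow> sympl_orth J B A"
  unfolding sympl_orth_def by (metis inner_commute inner_complex_structure_left neg_equal_0_iff_equal)

lemma sympl_orth_span_right: "sympl_orth J A B \<Longrightarrow> sympl_orth J A (span B)"
  unfolding sympl_orth_def
proof (intro ballI)
  fix a y assume AB: "\<forall>a\<in>A. \<forall>b\<in>B. a \<bullet> J b = 0" and a: "a \<in> A" and y: "y \<in> span B"
  have "orthogonal (J a) y"
    using AB a by (intro orthogonal_to_span[OF y]) (simp add: orthogonal_def inner_complex_structure_left)
  then show "a \<bullet> J y = 0"
    by (simp add: orthogonal_def inner_complex_structure_left)
qed

lemma sympl_orth_span: "sympl_orth J A B \<Longrightarrow> sympl_orth J (span A) (span B)"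
  by (rule sympl_orth_sym, rule sympl_orth_span_right, rule sympl_orth_sym, rule sympl_orth_span_right)

lemma separated_if_sympl_orth_ranges:
  assumes E: "real_proj E" and F: "real_proj F" and EF: "sympl_orth J (range E) (range F)"
  shows "separated J E F"
  unfolding separated_def proj_le_def
proof
  fix x assume x: "x \<in> range E"
  have "F (J x) \<bullet> z = 0" for z
  proof -
    have "F (J x) \<bullet> z = - (x \<bullet> J (F z))"
      using F complex_structure_J by (simp add: real_proj_def inner_complex_structure_left)
    then show ?thesis
      using EF x by (auto simp: sympl_orth_def)
  qed
  then have "F (J x) = 0"
    by (metis inner_eq_zero_iff)
  then have "proj_prime J F x = x"
    using complex_structure_J by (simp add: proj_prime_def)
  then show "x \<in> range (proj_prime J F)"
    by (metis rangeI)
qed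

lemma separated_proj_onto_span:
  assumes "finite A" and "finite B" and "sympl_orth J A B"
  shows "separated J (proj_onto (span A)) (proj_onto (span B))"
  using assms
  by (simp add: separated_if_sympl_orth_ranges real_proj_proj_onto_span sympl_orth_span)

lemma pairwise_separated_proj_onto_spans:
  assumes "\<And>i. i \<in> I \<Longrightarrow> finite (G i)"
    and "\<And>i j. i \<in> I \<Longrightarrow> j \<in> I \<Longrightarrow> i \<noteq> j \<Longrightarrow> sympl_orth J (G i) (G j)"
  shows "pairwise_separated J ((\<lambda>i. proj_onto (span (G i))) ` I)"
  unfolding pairwise_separated_def using assms by (auto intro: separated_proj_onto_span)

lemma sympl_orth_residual:
  assumes P: "real_proj P" and J_range: "\<And>w. w \<in> range P \<Longrightarrow> J w \<in> range P"
  shows "sympl_orth J (range P) {y - P y, J (y - P y)}"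
proof -
  define c where "c = y - P y"
  have "c \<bullet> w = 0" "c \<bullet> J w = 0" if "w \<in> range P" for w
    unfolding c_def using inner_residual_real_proj[OF P] that J_range by blast+
  then have "sympl_orth J (range P) {c, J c}"
    by (auto simp: sympl_orth_def inner_commute inner_complex_structure_commute[of _ c])
  then show ?thesis
    by (simp only: c_def)
qed

lemma cspan_insert_subset:
  assumes "x - y \<in> cspan J B"
  shows "cspan J (insert x B) \<subseteq> cspan J (insert y B)"
proof (rule span_minimal[OF _ subspace_span])
  let ?C = "cspan J (insert y B)"
  have sub: "cspan J B \<subseteq> ?C"
    by (rule span_mono) blast
  have y: "y \<in> ?C" "J y \<in> ?C"
    by (simp_all add: span_base)
  have xy: "x - y \<in> ?C" "J (x - y) \<in> ?C"
    using assms complex_structure_cspan[OF assms] sub by blast+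
  have "x \<in> ?C"
    using span_add[OF xy(1) y(1)] by (simp only: diff_add_cancel)
  moreover have "J x \<in> ?C"
    using span_add[OF xy(2) y(2)] by (simp only: complex_structure_simps diff_add_cancel)
  moreover have "B \<union> J ` B \<subseteq> ?C"
    using span_superset sub by (rule order_trans)
  ultimately show "insert x B \<union> J ` insert x B \<subseteq> ?C"
    by blast
qed

text \<open>Write u = (u - e_k) + e_k and J u = J (u + S - e_k) - J (S - e_k), where S is the sum of
  an orthonormal isotropic family e_0, ..., e_(n-1) orthogonal to u and J u. The pairs
  {e_k, J (S - e_k)} are isotropic, and the pairs {u - e_k, J (u + S - e_k)} are pairwise
  separated; the term S makes (u - e_j) and (u + S - e_k) orthogonal.\<close>

lemma complex_line_splitting:
  fixes e :: "nat \<Rightarrow> 'a"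
  assumes u: "u \<bullet> u = 1"
    and e: "\<And>j k. j < n \<Longrightarrow> k < n \<Longrightarrow> cinner J (e j) (e k) = (if j = k then 1 else 0)"
    and e_u: "\<And>k. k < n \<Longrightarrow> cinner J (e k) u = 0"
    and "j < n" and "k < n"
  defines "S \<equiv> \<Sum>k<n. e k"
  shows "sympl_orth J {e k, J (S - e k)} {e k, J (S - e k)}"
    and "sympl_orth J {e k, J (S - e k)} {u - e k, J (u + S - e k)}"
    and "span {u, J u} \<subseteq> span ({e k, J (S - e k)} \<union> {u - e k, J (u + S - e k)})"
    and "j \<noteq> k \<Longrightarrow> sympl_orth J {u - e j, J (u + S - e j)} {u - e k, J (u + S - e k)}"
    and "j \<noteq> k \<Longrightarrow> span {u - e j, J (u + S - e j)} \<noteq> span {u - e k, J (u + S - e k)}"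
proof -
  have ee: "e j \<bullet> e k = (if j = k then 1 else 0)" "e j \<bullet> J (e k) = 0" if "j < n" "k < n" for j k
    using e[OF that] by (auto simp: cinner_def complex_eq_iff)
  have eu: "e k \<bullet> u = 0" "e k \<bullet> J u = 0" "u \<bullet> e k = 0" "u \<bullet> J (e k) = 0" if "k < n" for k
    using e_u[OF that] by (auto simp: cinner_eq_0_iff inner_commute inner_complex_structure_commute[of u])
  have eS: "e i \<bullet> S = 1" "S \<bullet> e i = 1" "e i \<bullet> J S = 0" "S \<bullet> J (e i) = 0" if "i < n" for i
  proof -
    have "(\<Sum>l<n. e i \<bullet> e l) = (\<Sum>l<n. if l = i then 1 else 0)"
      using that ee by (intro sum.cong) auto
    moreover have "(\<Sum>l<n. e i \<bullet> J (e l)) = 0" "(\<Sum>l<n. e l \<bullet> J (e i)) = 0"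
      using that ee by (auto intro: sum.neutral)
    ultimately show "e i \<bullet> S = 1" "S \<bullet> e i = 1" "e i \<bullet> J S = 0" "S \<bullet> J (e i) = 0"
      using that by (simp_all add: S_def inner_sum_left inner_sum_right inner_commute[of _ "e i"])
  qed
  have uS: "u \<bullet> S = 0" "S \<bullet> u = 0" "u \<bullet> J S = 0" "S \<bullet> J u = 0"
    using eu by (simp_all add: S_def inner_sum_left inner_sum_right)
  note products = inner_diff_left inner_diff_right inner_add_left inner_add_right
    inner_complex_structure_left u ee eu eS uS \<open>j < n\<close> \<open>k < n\<close>
  show "sympl_orth J {e k, J (S - e k)} {e k, J (S - e k)}"
    "sympl_orth J {e k, J (S - e k)} {u - e k, J (u + S - e k)}"
    "j \<noteq> k \<Longrightarrow> sympl_orth J {u - e j, J (u + S - e j)} {u - e k, J (u + S - e k)}"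
    by (auto simp: sympl_orth_def products)
  let ?AB = "{e k, J (S - e k)} \<union> {u - e k, J (u + S - e k)}"
  have AB: "e k \<in> span ?AB" "u - e k \<in> span ?AB" "J (S - e k) \<in> span ?AB" "J (u + S - e k) \<in> span ?AB"
    by (auto intro: span_base)
  have "u \<in> span ?AB" "J u \<in> span ?AB"
    using span_add[OF AB(2,1)] span_diff[OF AB(4,3)] by simp_all
  then show "span {u, J u} \<subseteq> span ?AB"
    by (simp add: span_minimal)
  show "span {u - e j, J (u + S - e j)} \<noteq> span {u - e k, J (u + S - e k)}" if "j \<noteq> k"
  proof
    assume "span {u - e j, J (u + S - e j)} = span {u - e k, J (u + S - e k)}"
    then have "u - e j \<in> span {u - e k, J (u + S - e k)}"
      by (metis insertI1 span_base)
    moreover have "e j \<bullet> b = 0" if "b \<in> {u - e k, J (u + S - e k)}" for b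
      using that \<open>j \<noteq> k\<close> by (auto simp: products)
    ultimately have "e j \<bullet> (u - e j) = 0"
      by (rule inner_eq_0_span[rotated])
    then show False
      by (simp add: products)
  qed
qed

end

section \<open>Complex Gram-Schmidt process\<close>

definition complex_gram_schmidt ::
    "('a::{real_inner,complete_space} \<Rightarrow> 'a) \<Rightarrow> (nat \<Rightarrow> 'a) \<Rightarrow> nat \<Rightarrow> 'a" where
  "complex_gram_schmidt J d n = d n - proj_onto (cspan J (d ` {..<n})) (d n)"

context complex_hilbert_space
begin

lemma cspan_insert_mono:
  assumes "cspan J A \<subseteq> cspan J B"
  shows "cspan J (insert x A) \<subseteq> cspan J (insert x B)"
proof (rule span_minimal[OF _ subspace_span])
  have "A \<union> J ` A \<subseteq> cspan J A"
    by (rule span_superset)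
  also have "\<dots> \<subseteq> cspan J B"
    by (rule assms)
  also have "\<dots> \<subseteq> cspan J (insert x B)"
    by (rule span_mono) blast
  finally show "insert x A \<union> J ` insert x A \<subseteq> cspan J (insert x B)"
    by (auto intro: span_base)
qed

lemma complex_gram_schmidt_in_cspan:
  assumes "m < n"
  shows "complex_gram_schmidt J d m \<in> cspan J (d ` {..<n})"
proof -
  have "cspan J (d ` {..<m}) \<subseteq> cspan J (d ` {..<n})"
    using assms by (intro span_mono) auto
  then have "proj_onto (cspan J (d ` {..<m})) (d m) \<in> cspan J (d ` {..<n})"
    by (auto intro: proj_onto_span_in_span)
  moreover have "d m \<in> cspan J (d ` {..<n})"
    using assms by (intro span_base) auto
  ultimately show ?thesis
    by (simp add: complex_gram_schmidt_def span_diff)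
qed

lemma sympl_orth_complex_gram_schmidt:
  fixes d :: "nat \<Rightarrow> 'a"
  assumes "m \<noteq> n"
  defines "g \<equiv> complex_gram_schmidt J d"
  shows "sympl_orth J {g m, J (g m)} {g n, J (g n)}"
proof -
  have orth: "sympl_orth J {g m, J (g m)} {g n, J (g n)}" if "m < n" for m n
  proof (rule sympl_orth_subset)
    let ?P = "proj_onto (cspan J (d ` {..<n}))"
    show "sympl_orth J (range ?P) {g n, J (g n)}"
      unfolding g_def complex_gram_schmidt_def
      using complex_structure_cspan by (intro sympl_orth_residual) (auto simp: real_proj_proj_onto_span)
    show "{g m, J (g m)} \<subseteq> range ?P"
      using complex_gram_schmidt_in_cspan[OF that] complex_structure_cspan by (auto simp: g_def)
  qed simp
  consider "m < n" | "n < m"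
    using assms by linarith
  then show ?thesis
    by cases (simp_all add: orth sympl_orth_sym[OF orth])
qed

lemma cspan_complex_gram_schmidt:
  "cspan J (d ` {..<n}) \<subseteq> cspan J (complex_gram_schmidt J d ` {..<n})"
proof (induction n)
  case 0
  show ?case by simp
next
  case (Suc n)
  let ?g = "complex_gram_schmidt J d"
  have "cspan J (d ` {..<Suc n}) = cspan J (insert (d n) (d ` {..<n}))"
    by (simp add: lessThan_Suc)
  also have "\<dots> \<subseteq> cspan J (insert (?g n) (d ` {..<n}))"
    by (intro cspan_insert_subset) (simp add: complex_gram_schmidt_def)
  also have "\<dots> \<subseteq> cspan J (insert (?g n) (?g ` {..<n}))"
    using Suc.IH by (rule cspan_insert_mono)
  also have "\<dots> = cspan J (?g ` {..<Suc n})"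
    by (simp add: lessThan_Suc)
  finally show ?case .
qed

lemma range_subset_cspan_complex_gram_schmidt:
  "range d \<subseteq> cspan J (range (complex_gram_schmidt J d))"
proof
  fix x assume "x \<in> range d"
  then obtain n where "x = d n"
    by blast
  then have "x \<in> cspan J (d ` {..<Suc n})"
    by (intro span_base) auto
  also have "\<dots> \<subseteq> cspan J (complex_gram_schmidt J d ` {..<Suc n})"
    by (rule cspan_complex_gram_schmidt)
  also have "\<dots> \<subseteq> cspan J (range (complex_gram_schmidt J d))"
    by (intro span_mono) auto
  finally show "x \<in> cspan J (range (complex_gram_schmidt J d))" .
qed

end

section \<open>Counting separated projections\<close>

context complex_hilbert_space
begin

context
  fixes \<mu>
  assumes \<mu>: "fin_add_prob_measure J \<mu>"
begin

lemma fin_add_span_UN: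
  assumes "finite I" and "\<And>i. i \<in> I \<Longrightarrow> finite (G i)"
    and "\<And>i j. i \<in> I \<Longrightarrow> j \<in> I \<Longrightarrow> i \<noteq> j \<Longrightarrow> sympl_orth J (G i) (G j)"
  shows "\<mu> (proj_onto (span (\<Union>i\<in>I. G i))) = (\<Sum>E\<in>(\<lambda>i. proj_onto (span (G i))) ` I. \<mu> E)"
proof -
  have "pairwise_separated J ((\<lambda>i. proj_onto (span (G i))) ` I)"
    using assms(2,3) by (rule pairwise_separated_proj_onto_spans)
  moreover have "(\<lambda>i. proj_onto (span (G i))) ` I \<subseteq> Collect real_proj"
    using assms(2) by (auto simp: real_proj_proj_onto_span)
  ultimately show ?thesis
    using \<mu> assms(1,2)
    by (simp add: fin_add_prob_measure_def flip: proj_join_proj_onto_spans_finite)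
qed

lemma fin_add_span_UN_le:
  assumes "finite I" and "\<And>i. i \<in> I \<Longrightarrow> finite (G i)"
    and "\<And>i j. i \<in> I \<Longrightarrow> j \<in> I \<Longrightarrow> i \<noteq> j \<Longrightarrow> sympl_orth J (G i) (G j)"
  shows "\<mu> (proj_onto (span (\<Union>i\<in>I. G i))) \<le> (\<Sum>i\<in>I. \<mu> (proj_onto (span (G i))))"
proof -
  have "\<mu> (proj_onto (span (\<Union>i\<in>I. G i))) = (\<Sum>E\<in>(\<lambda>i. proj_onto (span (G i))) ` I. \<mu> E)"
    using assms by (rule fin_add_span_UN)
  also have "\<dots> \<le> (\<Sum>i\<in>I. \<mu> (proj_onto (span (G i))))"
    using sum_image_le[OF assms(1), of \<mu> "\<lambda>i. proj_onto (span (G i))"] assms(2)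
    by (simp add: o_def fin_add_nonneg[OF \<mu>] real_proj_proj_onto_span)
  finally show ?thesis .
qed

lemma fin_add_sum_spans_le_one:
  assumes "finite I" and "\<And>i. i \<in> I \<Longrightarrow> finite (G i)"
    and "\<And>i j. i \<in> I \<Longrightarrow> j \<in> I \<Longrightarrow> i \<noteq> j \<Longrightarrow> sympl_orth J (G i) (G j)"
    and "inj_on (\<lambda>i. proj_onto (span (G i))) I"
  shows "(\<Sum>i\<in>I. \<mu> (proj_onto (span (G i)))) \<le> 1"
proof -
  have "finite (\<Union>i\<in>I. G i)"
    using assms(1,2) by blast
  then have "\<mu> (proj_onto (span (\<Union>i\<in>I. G i))) \<le> 1"
    by (intro fin_add_le_one[OF \<mu>] real_proj_proj_onto_span)
  then show ?thesis
    using fin_add_span_UN[OF assms(1-3)] by (simp add: sum.reindex[OF assms(4)])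
qed

lemma fin_add_span_Un_le:
  assumes "finite A" and "finite B" and "sympl_orth J A B"
  shows "\<mu> (proj_onto (span (A \<union> B))) \<le> \<mu> (proj_onto (span A)) + \<mu> (proj_onto (span B))"
proof -
  define G where "G i = (if i then A else B)" for i
  have "sympl_orth J (G i) (G j)" if "i \<noteq> j" for i j
    using that assms(3) sympl_orth_sym[OF assms(3)] by (cases i) (auto simp: G_def)
  then have "\<mu> (proj_onto (span (\<Union>i\<in>UNIV. G i))) \<le> (\<Sum>i\<in>UNIV. \<mu> (proj_onto (span (G i))))"
    using assms(1,2) by (intro fin_add_span_UN_le) (auto simp: G_def)
  moreover have "(\<Union>i\<in>UNIV. G i) = A \<union> B"
    by (auto simp: G_def UNIV_bool)
  ultimately show ?thesis
    by (simp add: UNIV_bool G_def add.commute)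
qed

text \<open>Pigeonhole: n pairwise separated projections above E force n * \<mu> E \<le> 1.\<close>

lemma fin_add_eq_0_if_many_separated_above:
  assumes E: "real_proj E"
    and many: "\<And>n::nat. \<exists>G. (\<forall>k<n. finite (G k) \<and> \<mu> E \<le> \<mu> (proj_onto (span (G k))))
                 \<and> (\<forall>j<n. \<forall>k<n. j \<noteq> k \<longrightarrow> span (G j) \<noteq> span (G k) \<and> sympl_orth J (G j) (G k))"
  shows "\<mu> E = 0"
proof (rule ccontr)
  assume "\<mu> E \<noteq> 0"
  then have "0 < \<mu> E"
    using fin_add_nonneg[OF \<mu> E] by simp
  then obtain n where n: "1 < real n * \<mu> E"
    using ex_less_of_nat_mult by blast
  obtain G where G: "\<And>k. k < n \<Longrightarrow> finite (G k)" "\<And>k. k < n \<Longrightarrow> \<mu> E \<le> \<mu> (proj_onto (span (G k)))"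
    and distinct: "\<And>j k. j < n \<Longrightarrow> k < n \<Longrightarrow> j \<noteq> k \<Longrightarrow> span (G j) \<noteq> span (G k)"
    and orth: "\<And>j k. j < n \<Longrightarrow> k < n \<Longrightarrow> j \<noteq> k \<Longrightarrow> sympl_orth J (G j) (G k)"
    using many[of n] by blast
  have "inj_on (\<lambda>k. proj_onto (span (G k))) {..<n}"
    by (intro inj_onI) (metis G(1) distinct lessThan_iff range_proj_onto_span)
  then have "(\<Sum>k<n. \<mu> (proj_onto (span (G k)))) \<le> 1"
    using G(1) orth by (intro fin_add_sum_spans_le_one) auto
  moreover have "real n * \<mu> E \<le> (\<Sum>k<n. \<mu> (proj_onto (span (G k))))"
    using sum_mono[of "{..<n}" "\<lambda>_. \<mu> E"] G(2) by simp
  ultimately show False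
    using n by linarith
qed

end

end

section \<open>Vanishing on finite-dimensional subspaces\<close>

locale inf_dim_complex_hilbert_space = complex_hilbert_space J
  for J :: "'a::{real_inner,complete_space} \<Rightarrow> 'a" +
  assumes inf_dim: "\<not> fin_dim_real (UNIV :: 'a set)"
begin

lemma exists_unit_cinner_orthogonal:
  assumes "finite X"
  shows "\<exists>e. cinner J e e = 1 \<and> (\<forall>x\<in>X. cinner J e x = 0)"
proof -
  have "finite (X \<union> J ` X)"
    using assms by simp
  then obtain y where y: "y \<notin> cspan J X"
    using inf_dim unfolding fin_dim_real_def by blast
  define P where "P = proj_onto (cspan J X)"
  have P: "real_proj P" "range P = cspan J X"
    using \<open>finite (X \<union> J ` X)\<close> by (simp_all add: P_def real_proj_proj_onto_span)
  define d where "d = y - P y"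
  have "d \<noteq> 0"
    using y P(2) by (auto simp: d_def)
  define e where "e = (1 / norm d) *\<^sub>R d"
  have "e \<bullet> e = 1"
    using \<open>d \<noteq> 0\<close> by (simp add: e_def power2_norm_eq_inner[symmetric] power2_eq_square)
  moreover have "e \<bullet> w = 0" if "w \<in> cspan J X" for w
    using inner_residual_real_proj[OF P(1)] that P(2) by (simp add: e_def d_def)
  ultimately show ?thesis
    by (auto simp: cinner_def complex_eq_iff intro!: exI[of _ e] span_base)
qed

lemma exists_cinner_orthonormal_family:
  assumes "finite X"
  shows "\<exists>e::nat \<Rightarrow> 'a. (\<forall>j<n. \<forall>k<n. cinner J (e j) (e k) = (if j = k then 1 else 0))
                      \<and> (\<forall>k<n. \<forall>x\<in>X. cinner J (e k) x = 0)"
proof (induction n)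
  case 0
  show ?case by simp
next
  case (Suc n)
  then obtain e :: "nat \<Rightarrow> 'a" where
    e: "\<forall>j<n. \<forall>k<n. cinner J (e j) (e k) = (if j = k then 1 else 0)" "\<forall>k<n. \<forall>x\<in>X. cinner J (e k) x = 0"
    by blast
  obtain f where f: "cinner J f f = 1" "\<forall>x\<in>X \<union> e ` {..<n}. cinner J f x = 0"
    using exists_unit_cinner_orthogonal[of "X \<union> e ` {..<n}"] assms by auto
  have "cinner J (e k) f = 0" if "k < n" for k
    using f(2) that cinner_commute[of "e k" f] by simp
  then show ?case
    using e f by (intro exI[of _ "e(n := f)"]) (auto simp: less_Suc_eq)
qed

context
  fixes \<mu>
  assumes \<mu>: "fin_add_prob_measure J \<mu>"
begin

lemma fin_add_isotropic_span_eq_0: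
  assumes B: "finite B" and iso: "sympl_orth J B B"
  shows "\<mu> (proj_onto (span B)) = 0"
proof (rule fin_add_eq_0_if_many_separated_above[OF \<mu> real_proj_proj_onto_span[OF B]])
  fix n :: nat
  obtain e :: "nat \<Rightarrow> 'a" where
    e: "\<forall>j<n. \<forall>k<n. cinner J (e j) (e k) = (if j = k then 1 else 0)" "\<forall>k<n. \<forall>b\<in>B. cinner J (e k) b = 0"
    using exists_cinner_orthonormal_family[OF B] by blast
  have ee: "e j \<bullet> e k = (if j = k then 1 else 0)" "e j \<bullet> J (e k) = 0" if "j < n" "k < n" for j k
    using e(1) that by (auto simp: cinner_def complex_eq_iff)
  have eB: "e k \<bullet> b = 0" "e k \<bullet> J b = 0" "b \<bullet> e k = 0" "b \<bullet> J (e k) = 0" if "k < n" "b \<in> B" for k b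
  proof -
    have "cinner J (e k) b = 0"
      using e(2) that by blast
    then show "e k \<bullet> b = 0" "e k \<bullet> J b = 0" "b \<bullet> e k = 0" "b \<bullet> J (e k) = 0"
      by (simp_all add: cinner_eq_0_iff inner_commute inner_complex_structure_commute[of b])
  qed
  define G where "G k = insert (e k) B" for k
  have "\<mu> (proj_onto (span B)) \<le> \<mu> (proj_onto (span (G k)))" for k
    using B by (intro fin_add_mono_span[OF \<mu>] span_mono) (auto simp: G_def)
  moreover have "span (G j) \<noteq> span (G k)" if "j < n" "k < n" "j \<noteq> k" for j k
  proof
    assume "span (G j) = span (G k)"
    then have "e j \<in> span (G k)"
      by (metis G_def insertI1 span_base)
    moreover have "e j \<bullet> a = 0" if "a \<in> G k" for a
      using that \<open>j < n\<close> \<open>k < n\<close> \<open>j \<noteq> k\<close> by (auto simp: G_def ee eB)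
    ultimately have "e j \<bullet> e j = 0"
      by (rule inner_eq_0_span[rotated])
    then show False
      using ee(1)[of j j] that by simp
  qed
  moreover have "sympl_orth J (G j) (G k)" if "j < n" "k < n" for j k
    using iso that by (auto simp: sympl_orth_def G_def ee eB)
  ultimately show "\<exists>G. (\<forall>k<n. finite (G k) \<and> \<mu> (proj_onto (span B)) \<le> \<mu> (proj_onto (span (G k))))
           \<and> (\<forall>j<n. \<forall>k<n. j \<noteq> k \<longrightarrow> span (G j) \<noteq> span (G k) \<and> sympl_orth J (G j) (G k))"
    using B by (intro exI[of _ G]) (auto simp: G_def)
qed

lemma fin_add_span_le_if_isotropic_complement:
  assumes "finite A" and "finite B" and "finite C"
    and "sympl_orth J A A" and "sympl_orth J A B" and "span C \<subseteq> span (A \<union> B)"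
  shows "\<mu> (proj_onto (span C)) \<le> \<mu> (proj_onto (span B))"
proof -
  have "\<mu> (proj_onto (span C)) \<le> \<mu> (proj_onto (span (A \<union> B)))"
    using assms by (intro fin_add_mono_span[OF \<mu>]) auto
  also have "\<dots> \<le> \<mu> (proj_onto (span A)) + \<mu> (proj_onto (span B))"
    using assms by (intro fin_add_span_Un_le[OF \<mu>])
  finally show ?thesis
    using fin_add_isotropic_span_eq_0 assms by simp
qed

lemma fin_add_unit_complex_line_eq_0:
  assumes u: "u \<bullet> u = 1"
  shows "\<mu> (proj_onto (span {u, J u})) = 0"
proof (rule fin_add_eq_0_if_many_separated_above[OF \<mu> real_proj_proj_onto_span])
  fix n :: nat
  obtain e :: "nat \<Rightarrow> 'a" where
    e: "\<forall>j<n. \<forall>k<n. cinner J (e j) (e k) = (if j = k then 1 else 0)" "\<forall>k<n. cinner J (e k) u = 0"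
    using exists_cinner_orthonormal_family[of "{u}" n] by auto
  define S where "S = (\<Sum>k<n. e k)"
  define B where "B k = {u - e k, J (u + S - e k)}" for k
  note splitting = complex_line_splitting[OF u, of n e, folded S_def]
  have "\<mu> (proj_onto (span {u, J u})) \<le> \<mu> (proj_onto (span (B k)))" if "k < n" for k
    unfolding B_def using e that splitting(1-3)[of k k]
    by (intro fin_add_span_le_if_isotropic_complement[of "{e k, J (S - e k)}"]) auto
  then show "\<exists>G. (\<forall>k<n. finite (G k) \<and> \<mu> (proj_onto (span {u, J u})) \<le> \<mu> (proj_onto (span (G k))))
           \<and> (\<forall>j<n. \<forall>k<n. j \<noteq> k \<longrightarrow> span (G j) \<noteq> span (G k) \<and> sympl_orth J (G j) (G k))"
    using e splitting(4,5) by (intro exI[of _ B]) (auto simp: B_def)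
qed simp

lemma fin_add_complex_line_eq_0: "\<mu> (proj_onto (span {u, J u})) = 0"
proof (cases "u = 0")
  case True
  then show ?thesis
    using fin_add_span_empty[OF \<mu>] by simp
next
  case False
  define v where "v = (1 / norm u) *\<^sub>R u"
  have "v \<bullet> v = 1"
    using False by (simp add: v_def power2_norm_eq_inner[symmetric] power2_eq_square)
  moreover have "span {v, J v} = span {u, J u}"
  proof -
    have "span ((\<lambda>x. (1 / norm u) *\<^sub>R x) ` {u, J u}) = span {u, J u}"
      using False by (intro span_image_scale) auto
    then show ?thesis
      by (simp add: v_def)
  qed
  ultimately show ?thesis
    using fin_add_unit_complex_line_eq_0 by metis
qed

lemma fin_add_cspan_eq_0:
  assumes "finite B"
  shows "\<mu> (proj_onto (cspan J B)) = 0"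
  using assms
proof (induction B rule: finite_induct)
  case empty
  show ?case
    using fin_add_span_empty[OF \<mu>] by simp
next
  case (insert b B)
  define P where "P = proj_onto (cspan J B)"
  have fin: "finite (B \<union> J ` B)"
    using insert.hyps by simp
  have P: "real_proj P" "range P = cspan J B"
    using fin by (simp_all add: P_def real_proj_proj_onto_span)
  define c where "c = b - P b"
  have "sympl_orth J (range P) {c, J c}"
    unfolding c_def using P complex_structure_cspan by (intro sympl_orth_residual) auto
  then have orth: "sympl_orth J (B \<union> J ` B) {c, J c}"
    by (rule sympl_orth_subset) (auto simp: P(2) intro: span_base)
  have "cspan J (insert b B) \<subseteq> cspan J (insert c B)"
    using P by (intro cspan_insert_subset) (auto simp: c_def)
  also have "\<dots> = span ((B \<union> J ` B) \<union> {c, J c})"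
    by (rule arg_cong[where f = span]) auto
  finally have "\<mu> (proj_onto (cspan J (insert b B))) \<le> \<mu> (proj_onto (span ((B \<union> J ` B) \<union> {c, J c})))"
    using fin by (intro fin_add_mono_span[OF \<mu>]) auto
  also have "\<dots> \<le> \<mu> (proj_onto (cspan J B)) + \<mu> (proj_onto (span {c, J c}))"
    using fin orth by (intro fin_add_span_Un_le[OF \<mu>]) auto
  finally have "\<mu> (proj_onto (cspan J (insert b B))) \<le> 0"
    using insert.IH fin_add_complex_line_eq_0[of c] by simp
  moreover have "0 \<le> \<mu> (proj_onto (cspan J (insert b B)))"
    using insert.hyps by (intro fin_add_nonneg[OF \<mu>] real_proj_proj_onto_span) simp
  ultimately show ?case
    by linarith
qed

lemma fin_add_fin_dim_eq_0:
  assumes E: "real_proj E" and "fin_dim_real (range E)"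
  shows "\<mu> E = 0"
proof -
  obtain B where B: "finite B" "span B = range E"
    using assms(2) by (auto simp: fin_dim_real_def)
  have "\<mu> E = \<mu> (proj_onto (span B))"
    using proj_onto_range[OF E] B(2) by simp
  also have "\<dots> \<le> \<mu> (proj_onto (cspan J B))"
    using B(1) by (intro fin_add_mono_span[OF \<mu>] span_mono) auto
  finally show ?thesis
    using fin_add_cspan_eq_0[OF B(1)] fin_add_nonneg[OF \<mu> E] by simp
qed

end

section \<open>No countably additive measure in the separable case\<close>

lemma no_prob_measure_if_separable:
  assumes "separable_space (euclidean :: 'a topology)"
  shows "\<not> prob_measure J \<mu>"
proof
  assume pm: "prob_measure J \<mu>"
  then have \<mu>: "fin_add_prob_measure J \<mu>"
    by (rule prob_measure_imp_fin_add)
  have has_sum_join: "(\<mu> has_sum \<mu> (proj_join Q)) Q"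
    if "countable Q" "Q \<subseteq> Collect real_proj" "pairwise_separated J Q" for Q
    using pm that by (simp add: prob_measure_def)
  obtain C :: "'a set" where C: "countable C" "closure C = UNIV"
    using assms by (auto simp: separable_space_def)
  then have "C \<noteq> {}"
    by auto
  then have C_eq: "range (from_nat_into C) = C"
    using C(1) by (rule range_from_nat_into)
  define c where "c = complex_gram_schmidt J (from_nat_into C)"
  have dense: "C \<subseteq> cspan J (range c)"
    using range_subset_cspan_complex_gram_schmidt C_eq unfolding c_def by metis
  define G where "G n = {c n, J (c n)}" for n
  define Q where "Q = range (\<lambda>n. proj_onto (span (G n)))"
  have "range c \<union> J ` range c = (\<Union>n. G n)"
    by (auto simp: G_def)
  then have "closure (span (\<Union>n. G n)) = UNIV"
    using closure_mono[OF dense] C(2) by (simp add: top.extremum_unique)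
  then have "proj_join Q = id"
    using proj_join_proj_onto_spans[of UNIV G] proj_onto_range[OF real_proj_id]
    by (simp add: Q_def G_def)
  moreover have "(\<mu> has_sum \<mu> (proj_join Q)) Q"
  proof (rule has_sum_join)
    show "countable Q" "Q \<subseteq> Collect real_proj"
      by (auto simp: Q_def G_def real_proj_proj_onto_span)
    show "pairwise_separated J Q"
      unfolding Q_def c_def G_def
      by (intro pairwise_separated_proj_onto_spans sympl_orth_complex_gram_schmidt) auto
  qed
  moreover have "(\<mu> has_sum 0) Q"
    by (rule has_sum_0) (auto simp: Q_def G_def fin_add_complex_line_eq_0[OF \<mu>])
  ultimately have "\<mu> id = 0"
    using has_sum_unique by fastforce
  then show False
    using \<mu> by (simp add: fin_add_prob_measure_def prob_basic_def)
qed

end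

theorem theorem5p3:
  fixes J :: "'a::{real_inner,complete_space} \<Rightarrow> 'a"
  assumes "complex_structure J"
    and "\<not> fin_dim_real (UNIV :: 'a set)"
  shows "(\<forall>\<mu>. fin_add_prob_measure J \<mu> \<longrightarrow>
            (\<forall>E. real_proj E \<and> fin_dim_real (range E) \<longrightarrow> \<mu> E = 0))
       \<and> (separable_space (euclidean :: 'a topology) \<longrightarrow> \<not> (\<exists>\<mu>. prob_measure J \<mu>))"
proof -
  interpret inf_dim_complex_hilbert_space J
    using assms by unfold_locales
  show ?thesis
    using fin_add_fin_dim_eq_0 no_prob_measure_if_separable by blast
qed

end
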